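(* For each of the following pairs $(X,i)$ there is no infinite binary word $\mathbf{x}$ with $p_i\,\mu(\mathbf{x})\in X$: $(B,2)$, $(B,4)$, $(D,2)$, $(D,4)$, $(C,1)$, $(C,2)$, $(C,4)$, $(E,2)$, $(E,3)$, $(E,4)$, $(F,0)$, $(F,1)$, $(F,2)$, $(F,4)$, $(J,2)$, $(J,3)$, $(J,4)$, $(K,2)$, $(K,3)$, $(K,4)$, $(I,0)$, $(I,2)$, $(I,3)$, $(I,4)$, $(G,1)$, $(G,2)$, $(G,4)$, $(H,1)$, $(H,2)$, $(H,4)$.
   Context: $\Sigma=\{0,1\}$. An overlap is a word $axaxa$ with $a\in\Sigma$, $x\in\Sigma^*$; a word is overlap-free if it has no overlap as a factor. $\mathcal{O}$ is the set of right-infinite binary overlap-free words, and $\mu$ is the morphism $0\mapsto01$, $1\mapsto10$. $p_0=\epsilon$, $p_1=0$, $p_2=00$, $p_3=1$, $p_4=11$. Subsets of $\Sigma^\omega$: $A=\mathcal{O}$; $B=\{\mathbf{x}: 1\mathbf{x}\in\mathcal{O}\}$; $C=\{\mathbf{x}: 1\mathbf{x}\in\mathcal{O}$ and $\mathbf{x}$ begins with $101\}$; $D=\{\mathbf{x}: 0\mathbf{x}\in\mathcal{O}\}$; $E=\{\mathbf{x}: 0\mathbf{x}\in\mathcal{O}$ and $\mathbf{x}$ begins with $010\}$; $F=\{\mathbf{x}: 0\mathbf{x}\in\mathcal{O}$ and $\mathbf{x}$ begins with $11\}$; $G=\{\mathbf{x}: 0\mathbf{x}\in\mathcal{O}$ and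 $\mathbf{x}$ begins with $1\}$; $H=\{\mathbf{x}: 1\mathbf{x}\in\mathcal{O}$ and $\mathbf{x}$ begins with $1\}$; $I=\{\mathbf{x}: 1\mathbf{x}\in\mathcal{O}$ and $\mathbf{x}$ begins with $00\}$; $J=\{\mathbf{x}: 1\mathbf{x}\in\mathcal{O}$ and $\mathbf{x}$ begins with $0\}$; $K=\{\mathbf{x}: 0\mathbf{x}\in\mathcal{O}$ and $\mathbf{x}$ begins with $0\}$. *)

theory Defs
  imports Main
begin

text \<open>Binary letters: False = 0, True = 1. Finite words are bool lists,
right-infinite words are functions nat \<Rightarrow> bool.\<close>

type_synonym iword = "nat \<Rightarrow> bool"

definition prep :: "bool list \<Rightarrow> iword \<Rightarrow> iword" where
  "prep p x = (\<lambda>n. if n < length p then p ! n else x (n - length p))"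

definition is_factor :: "bool list \<Rightarrow> iword \<Rightarrow> bool" where
  "is_factor w x = (\<exists>i. w = map x [i..<i + length w])"

definition is_overlap :: "bool list \<Rightarrow> bool" where
  "is_overlap w = (\<exists>a xs. w = a # xs @ a # xs @ [a])"

definition overlap_free :: "iword \<Rightarrow> bool" where
  "overlap_free x = (\<forall>w. is_factor w x \<longrightarrow> \<not> is_overlap w)"

definition OF :: "iword set" where
  "OF = {x. overlap_free x}"

text \<open>The Thue--Morse morphism mu: 0 \<mapsto> 01, 1 \<mapsto> 10, applied to an infinite word.\<close>
definition mu :: "iword \<Rightarrow> iword" where
  "mu x = (\<lambda>n. if even n then x (n div 2) else \<not> x (n div 2))"

definition begins_with :: "bool list \<Rightarrow> iword \<Rightarrow> bool" where
  "begins_with w x = (\<forall>i < length w. x i = w ! i)"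

fun pw :: "nat \<Rightarrow> bool list" where
  "pw 0 = []"
| "pw (Suc 0) = [False]"
| "pw (Suc (Suc 0)) = [False, False]"
| "pw (Suc (Suc (Suc 0))) = [True]"
| "pw (Suc (Suc (Suc (Suc 0)))) = [True, True]"
| "pw _ = []"

definition SB :: "iword set" where "SB = {x. prep [True] x \<in> OF}"
definition SC :: "iword set" where "SC = {x. prep [True] x \<in> OF \<and> begins_with [True, False, True] x}"
definition SD :: "iword set" where "SD = {x. prep [False] x \<in> OF}"
definition SE :: "iword set" where "SE = {x. prep [False] x \<in> OF \<and> begins_with [False, True, False] x}"
definition SF :: "iword set" where "SF = {x. prep [False] x \<in> OF \<and> begins_with [True, True] x}"
definition SG :: "iword set" where "SG = {x. prep [False] x \<in> OF \<and> begins_with [True] x}"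
definition SH :: "iword set" where "SH = {x. prep [True] x \<in> OF \<and> begins_with [True] x}"
definition SI :: "iword set" where "SI = {x. prep [True] x \<in> OF \<and> begins_with [False, False] x}"
definition SJ :: "iword set" where "SJ = {x. prep [True] x \<in> OF \<and> begins_with [False] x}"
definition SK :: "iword set" where "SK = {x. prep [False] x \<in> OF \<and> begins_with [False] x}"

end

theory Submission
  imports Defs
begin

text \<open>
  If p_i = aa (i = 2 or i = 4), every set X prescribes a word c a a mu(x) for a
  single letter c.  Such a word always contains a short overlap: aaa if c = a or
  if x begins with a; otherwise mu(x) begins with (not a) a, and then either
  a (not a) a (not a) a or (not a) a a (not a) a a (not a) occurs, depending on
  the second letter of x.  Hence it is never overlap-free.

  In the ten remaining cases the prefix required by X clashes with the letters
  of p_i mu(x): either the prepended letter of p_i contradicts the first letter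
  required by X, or X asks for a word beginning with a square of a letter while
  mu(x) begins with two distinct letters.
\<close>

lemma prep_Nil [simp]: "prep [] z = z"
  by (simp add: prep_def fun_eq_iff)

lemma prep_Cons_0 [simp]: "prep (a # p) z 0 = a"
  by (simp add: prep_def)

lemma prep_Cons_Suc [simp]: "prep (a # p) z (Suc n) = prep p z n"
  by (simp add: prep_def)

lemma mu_first_letters:
  "mu x 0 = x 0" "mu x 1 = (\<not> x 0)" "mu x 2 = x 1" "mu x 3 = (\<not> x 1)"
  by (simp_all add: mu_def)

lemma begins_with_Cons:
  "begins_with (a # w) z \<longleftrightarrow> z 0 = a \<and> begins_with w (\<lambda>n. z (Suc n))"
  unfolding begins_with_def by (auto simp: less_Suc_eq_0_disj)

lemma overlap_free_no_overlap_at: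
  assumes "overlap_free y" and "is_overlap w"
  shows "map y [i..<i + length w] \<noteq> w"
  using assms unfolding overlap_free_def is_factor_def by metis

lemma overlap_free_no_cube:
  assumes "overlap_free y"
  shows "\<not> (y i = a \<and> y (i + 1) = a \<and> y (i + 2) = a)"
proof -
  have "is_overlap [a, a, a]"
    unfolding is_overlap_def by (rule exI[of _ a], rule exI[of _ "[]"]) simp
  from overlap_free_no_overlap_at[OF assms this, of i] show ?thesis
    by (simp add: upt_rec eval_nat_numeral)
qed

lemma overlap_free_no_ababa:
  assumes "overlap_free y"
  shows "\<not> (y i = a \<and> y (i + 1) = b \<and> y (i + 2) = a \<and> y (i + 3) = b \<and> y (i + 4) = a)"
proof -
  have "is_overlap [a, b, a, b, a]"
    unfolding is_overlap_def by (rule exI[of _ a], rule exI[of _ "[b]"]) simp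
  from overlap_free_no_overlap_at[OF assms this, of i] show ?thesis
    by (simp add: upt_rec eval_nat_numeral)
qed

lemma overlap_free_no_abbabba:
  assumes "overlap_free y"
  shows "\<not> (y i = a \<and> y (i + 1) = b \<and> y (i + 2) = b \<and> y (i + 3) = a \<and>
            y (i + 4) = b \<and> y (i + 5) = b \<and> y (i + 6) = a)"
proof -
  have "is_overlap [a, b, b, a, b, b, a]"
    unfolding is_overlap_def by (rule exI[of _ a], rule exI[of _ "[b, b]"]) simp
  from overlap_free_no_overlap_at[OF assms this, of i] show ?thesis
    by (simp add: upt_rec eval_nat_numeral)
qed

lemma square_before_mu_not_overlap_free:
  "\<not> overlap_free (prep [c] (prep [a, a] (mu x)))"
proof
  define y where "y = prep [c] (prep [a, a] (mu x))"
  assume "overlap_free (prep [c] (prep [a, a] (mu x)))"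
  then have of: "overlap_free y" by (simp add: y_def)
  have y0: "y 0 = c" and y12: "y 1 = a" "y 2 = a"
    and y34: "y 3 = x 0" "y 4 = (\<not> x 0)"
    and y56: "y 5 = x 1" "y 6 = (\<not> x 1)"
    using mu_first_letters by (simp_all add: y_def numeral_eq_Suc)
  have "c \<noteq> a"
    using overlap_free_no_cube[OF of, of 0 a] y0 y12 by (simp add: numeral_eq_Suc)
  moreover have "x 0 \<noteq> a"
    using overlap_free_no_cube[OF of, of 1 a] y12 y34 by (simp add: numeral_eq_Suc)
  moreover have "x 1 = a"
    using overlap_free_no_ababa[OF of, of 2 a "\<not> a"] y12 y34 y56 \<open>x 0 \<noteq> a\<close>
    by (auto simp: numeral_eq_Suc)
  ultimately show False
    using overlap_free_no_abbabba[OF of, of 0 "\<not> a" a] y0 y12 y34 y56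
    by (auto simp: numeral_eq_Suc)
qed

text \<open>mu(x) begins with two distinct letters, so never with aa.\<close>
lemma mu_not_begins_with_square: "\<not> begins_with [a, a] (mu x)"
  using mu_first_letters by (auto simp: begins_with_Cons)

lemma begins_with_prep_Cons:
  "begins_with (a # w) (prep (b # p) z) \<Longrightarrow> a = b"
  by (simp add: begins_with_Cons)

theorem mainTheorem3:
  shows "\<forall>(X, i) \<in> set [(SB,2), (SB,4), (SD,2), (SD,4), (SC,1), (SC,2), (SC,4),
      (SE,2), (SE,3), (SE,4), (SF,0), (SF,1), (SF,2), (SF,4), (SJ,2), (SJ,3), (SJ,4),
      (SK,2), (SK,3), (SK,4), (SI,0), (SI,2), (SI,3), (SI,4), (SG,1), (SG,2), (SG,4),
      (SH,1), (SH,2), (SH,4::nat)].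
    \<not> (\<exists>x :: iword. prep (pw i) (mu x) \<in> X)"
proof -
  have pw_values: "pw 0 = []" "pw 1 = [False]" "pw 2 = [False, False]"
    "pw 3 = [True]" "pw 4 = [True, True]"
    by (simp_all add: numeral_eq_Suc)
  have square: "\<And>c a x. prep [c] (prep [a, a] (mu x)) \<notin> OF"
    using square_before_mu_not_overlap_free by (simp add: OF_def)
  show ?thesis
    using square mu_not_begins_with_square begins_with_prep_Cons
    by (simp add: pw_values SB_def SC_def SD_def SE_def SF_def SG_def SH_def SI_def SJ_def
        SK_def) blast
qed

end
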